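(* For each $i\in E$, the torus-invariant divisors $\widetilde y_j$, $j\in\pi^{-1}(i)$, all have the same class in $A^1(X_{\mathbf a})$; denote it $y_i$. Moreover, $$A^\bullet(X_{\mathbf a})=\frac{\mathbb Z[x_S,y_i:\emptyset\subseteq S\subsetneq E,\ i\in E]}{\langle x_{S_1}x_{S_2}:S_1,S_2\text{ incomparable}\rangle+\langle x_Sy_i^{a_i}:i\notin S\rangle+\langle y_i-\sum_{S\not\ni i}x_S:i\in E\rangle}.$$
   Context: $E=\{1,\dots,m\}$, $\mathbf a\in\mathbb Z^m_{\ge0}$, $n=\sum a_i$, $\widetilde E$ an $n$-element set, $\pi:\widetilde E\to E$ with $|\pi^{-1}(i)|=a_i$, $\mathbf e_U=\sum_{j\in U}\mathbf e_j$. The polystellahedral fan $\Sigma_{\mathbf a}\subset\mathbb R^{\widetilde E}$ has cones $\operatorname{cone}(-\mathbf e_{\widetilde E\setminus\pi^{-1}(F_1)},\dots,-\mathbf e_{\widetilde E\setminus\pi^{-1}(F_k)},\mathbf e_j:j\in I)$ for $I\subseteq\widetilde E$ and chains $F_1\subsetneq\dots\subsetneq F_k\subsetneq F_{k+1}=E$ ($k\ge0$) with $\pi^{-1}(A)\subseteq I\Rightarrow A\subseteq F_1$; $X_{\mathbf a}$ its smooth projective toric variety. Its rays are $\rho_j=\mathbb R_{\ge0}\mathbf e_j$ ($j\in\widetilde E$), with divisor $\widetilde y_j$, and $\rho_S=\mathbb R_{\ge0}(-\mathbf e_{\widetilde E\setminus\pi^{-1}(S)})$ ($\emptyset\subseteq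 S\subsetneq E$), with divisor class $x_S$. *)

theory Defs
  imports "HOL-Library.Poly_Mapping" "HOL-Algebra.QuotRing" "HOL-Algebra.RingHom"
begin

type_synonym 'v mpoly = "('v \<Rightarrow>\<^sub>0 nat) \<Rightarrow>\<^sub>0 int"

definition mvar :: "'v \<Rightarrow> 'v mpoly" where
  "mvar v = Poly_Mapping.single (Poly_Mapping.single v 1) 1"

definition mpoly_ring :: "'v set \<Rightarrow> 'v mpoly ring" where
  "mpoly_ring V = \<lparr>carrier = {p :: 'v mpoly. \<forall>\<mu>\<in>Poly_Mapping.keys p. Poly_Mapping.keys \<mu> \<subseteq> V},
                   mult = (*), one = 1, zero = 0, add = (+)\<rparr>"

definition cls :: "('a, 'b) ring_scheme \<Rightarrow> 'a set \<Rightarrow> 'a \<Rightarrow> 'a set" where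
  "cls R I p = a_r_coset R I p"

text \<open>Ray labels: \<open>RS S\<close> is the ray rho_S (S a proper subset of E), \<open>RE j\<close> the ray rho_j (j in E~).\<close>
datatype 'e ray = RS "nat set" | RE 'e

definition groundE :: "nat \<Rightarrow> nat set" where
  "groundE m = {1..m}"

definition rays :: "nat \<Rightarrow> 'e set \<Rightarrow> 'e ray set" where
  "rays m Et = RS ` {S. S \<subset> groundE m} \<union> RE ` Et"

text \<open>A set of rays spans a cone of Sigma_a iff it is of the form
  {rho_F1,...,rho_Fk} \<union> {rho_j : j in I} with I \<subseteq> E~, F1 \<subset> ... \<subset> Fk \<subset> E a chain
  (k \<ge> 0, F_{k+1} = E), such that pi^{-1}(A) \<subseteq> I implies A \<subseteq> F1 for all A \<subseteq> E.\<close>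
definition is_cone :: "nat \<Rightarrow> 'e set \<Rightarrow> ('e \<Rightarrow> nat) \<Rightarrow> 'e ray set \<Rightarrow> bool" where
  "is_cone m Et \<pi> \<sigma> \<longleftrightarrow>
     (\<exists>I \<F>. I \<subseteq> Et \<and> (\<forall>F\<in>\<F>. F \<subset> groundE m) \<and>
        (\<forall>F\<in>\<F>. \<forall>G\<in>\<F>. F \<subseteq> G \<or> G \<subseteq> F) \<and>
        \<sigma> = RS ` \<F> \<union> RE ` I \<and>
        (\<forall>A. A \<subseteq> groundE m \<longrightarrow> {j\<in>Et. \<pi> j \<in> A} \<subseteq> I \<longrightarrow>
              A \<subseteq> (if \<F> = {} then groundE m else \<Inter>\<F>)))"

definition SR_gens :: "nat \<Rightarrow> 'e set \<Rightarrow> ('e \<Rightarrow> nat) \<Rightarrow> 'e ray mpoly set" where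
  "SR_gens m Et \<pi> = {prod mvar \<sigma> | \<sigma>. \<sigma> \<subseteq> rays m Et \<and> \<not> is_cone m Et \<pi> \<sigma>}"

text \<open>Linear relations: for each coordinate functional e_k^* (k in E~),
  sum over rays rho of <e_k, v_rho> [D_rho], where v_{rho_j} = e_j and
  v_{rho_S} = - e_{E~ \ pi^{-1}(S)}.\<close>
definition lin_gens :: "nat \<Rightarrow> 'e set \<Rightarrow> ('e \<Rightarrow> nat) \<Rightarrow> 'e ray mpoly set" where
  "lin_gens m Et \<pi> = {mvar (RE k) - (\<Sum>S\<in>{S. S \<subset> groundE m \<and> \<pi> k \<notin> S}. mvar (RS S)) | k. k \<in> Et}"

definition chow_poly :: "nat \<Rightarrow> 'e set \<Rightarrow> 'e ray mpoly ring" where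
  "chow_poly m Et = mpoly_ring (rays m Et)"

definition chow_ideal :: "nat \<Rightarrow> 'e set \<Rightarrow> ('e \<Rightarrow> nat) \<Rightarrow> 'e ray mpoly set" where
  "chow_ideal m Et \<pi> = genideal (chow_poly m Et) (SR_gens m Et \<pi> \<union> lin_gens m Et \<pi>)"

text \<open>Chow ring A^*(X_a) via the Danilov--Jurkiewicz presentation.\<close>
definition chow_ring :: "nat \<Rightarrow> 'e set \<Rightarrow> ('e \<Rightarrow> nat) \<Rightarrow> 'e ray mpoly set ring" where
  "chow_ring m Et \<pi> = chow_poly m Et Quot chow_ideal m Et \<pi>"

datatype gen = GX "nat set" | GY nat

definition pres_vars :: "nat \<Rightarrow> gen set" where
  "pres_vars m = GX ` {S. S \<subset> groundE m} \<union> GY ` groundE m"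

definition pres_poly :: "nat \<Rightarrow> gen mpoly ring" where
  "pres_poly m = mpoly_ring (pres_vars m)"

definition pres_gens :: "nat \<Rightarrow> (nat \<Rightarrow> nat) \<Rightarrow> gen mpoly set" where
  "pres_gens m a =
     {mvar (GX S1) * mvar (GX S2) | S1 S2. S1 \<subset> groundE m \<and> S2 \<subset> groundE m
                                        \<and> \<not> S1 \<subseteq> S2 \<and> \<not> S2 \<subseteq> S1}
   \<union> {mvar (GX S) * mvar (GY i) ^ a i | S i. S \<subset> groundE m \<and> i \<in> groundE m \<and> i \<notin> S}
   \<union> {mvar (GY i) - (\<Sum>S\<in>{S. S \<subset> groundE m \<and> i \<notin> S}. mvar (GX S)) | i. i \<in> groundE m}"

definition pres_ideal :: "nat \<Rightarrow> (nat \<Rightarrow> nat) \<Rightarrow> gen mpoly set" where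
  "pres_ideal m a = genideal (pres_poly m) (pres_gens m a)"

definition pres_ring :: "nat \<Rightarrow> (nat \<Rightarrow> nat) \<Rightarrow> gen mpoly set ring" where
  "pres_ring m a = pres_poly m Quot pres_ideal m a"

end

theory Submission
  imports Defs
begin

text \<open>Both rings are quotients of polynomial rings, and the substitutions
  \<open>x\<^sub>S \<mapsto> x\<^sub>S, y\<^sub>i \<mapsto> \<Sum>\<^bsub>S \<not>\<ni> i\<^esub> x\<^sub>S\<close> and
  \<open>x\<^sub>S \<mapsto> x\<^sub>S, \<tilde>y\<^sub>j \<mapsto> y\<^bsub>\<pi> j\<^esub>\<close> carry each ideal into the other and are mutually inverse
  modulo the ideals, so they induce inverse isomorphisms of the quotients. Modulo the linear
  relations every \<open>\<tilde>y\<^sub>j\<close> with \<open>\<pi> j = i\<close> equals \<open>y\<^sub>i\<close>, hence \<open>x\<^sub>S y\<^sub>i\<^bsup>a\<^sub>i\<^esup>\<close> is congruent to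
  \<open>x\<^sub>S \<Prod>\<^bsub>\<pi> j = i\<^esub> \<tilde>y\<^sub>j\<close>, the Stanley--Reisner monomial of the non-face
  \<open>{\<rho>\<^sub>S} \<union> {\<rho>\<^sub>j : \<pi> j = i}\<close> (\<open>i \<notin> S\<close>). Conversely, every non-face contains either two rays
  \<open>\<rho>\<^sub>S\<close> with incomparable \<open>S\<close> or such a set, so Stanley--Reisner monomials land in the
  presentation ideal.\<close>

section \<open>Polynomial rings over a set of variables\<close>

definition mpolys :: "'v set \<Rightarrow> 'v mpoly set" where
  "mpolys V = {p. \<forall>\<mu>\<in>Poly_Mapping.keys p. Poly_Mapping.keys \<mu> \<subseteq> V}"

lemma mpoly_ring_simps [simp]:
  "carrier (mpoly_ring V) = mpolys V" "mult (mpoly_ring V) = (*)" "add (mpoly_ring V) = (+)"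
  "one (mpoly_ring V) = 1" "zero (mpoly_ring V) = 0"
  by (simp_all add: mpoly_ring_def mpolys_def)

lemma mem_mpolys: "p \<in> mpolys V \<longleftrightarrow> (\<forall>\<mu>\<in>Poly_Mapping.keys p. Poly_Mapping.keys \<mu> \<subseteq> V)"
  by (simp add: mpolys_def)

lemma mpolys_UNIV [simp]: "mpolys UNIV = UNIV"
  by (simp add: mpolys_def)

lemma mpolys_0 [simp]: "0 \<in> mpolys V"
  and mpolys_1 [simp]: "1 \<in> mpolys V"
  and mpolys_mvar [simp]: "v \<in> V \<Longrightarrow> mvar v \<in> mpolys V"
  and mpolys_uminus [simp]: "p \<in> mpolys V \<Longrightarrow> - p \<in> mpolys V"
  by (simp_all add: mem_mpolys mvar_def)

lemma mpolys_add [simp]: "p \<in> mpolys V \<Longrightarrow> q \<in> mpolys V \<Longrightarrow> p + q \<in> mpolys V"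
  using keys_add[of p q] unfolding mem_mpolys by blast

lemma mpolys_diff [simp]: "p \<in> mpolys V \<Longrightarrow> q \<in> mpolys V \<Longrightarrow> p - q \<in> mpolys V"
  using keys_diff[of p q] unfolding mem_mpolys by blast

lemma keys_add_monomial: "Poly_Mapping.keys ((\<mu>::'v \<Rightarrow>\<^sub>0 nat) + \<nu>) = Poly_Mapping.keys \<mu> \<union> Poly_Mapping.keys \<nu>"
  by (auto simp: in_keys_iff lookup_add)

lemma mpolys_mult [simp]: "p \<in> mpolys V \<Longrightarrow> q \<in> mpolys V \<Longrightarrow> p * q \<in> mpolys V"
  using keys_mult[of p q] unfolding mem_mpolys by (force simp: keys_add_monomial)

lemma mpolys_sum [simp]: "(\<And>x. x \<in> A \<Longrightarrow> f x \<in> mpolys V) \<Longrightarrow> sum f A \<in> mpolys V"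
  by (induction A rule: infinite_finite_induct) auto

lemma mpolys_prod [simp]: "(\<And>x. x \<in> A \<Longrightarrow> f x \<in> mpolys V) \<Longrightarrow> prod f A \<in> mpolys V"
  by (induction A rule: infinite_finite_induct) auto

lemma mpolys_power [simp]: "p \<in> mpolys V \<Longrightarrow> p ^ n \<in> mpolys V"
  by (induction n) auto

lemma cring_mpoly_ring: "cring (mpoly_ring V)"
proof (rule cringI)
  show "abelian_group (mpoly_ring V)"
    by (rule abelian_groupI) (auto intro!: bexI[of _ "- _"])
  show "comm_monoid (mpoly_ring V)"
    by (rule comm_monoidI) (auto simp: mult.assoc mult.commute)
qed (simp add: distrib_right)

lemma ring_mpoly_ring: "ring (mpoly_ring V)"
  using cring_mpoly_ring cring.axioms(1) by blast

lemma a_inv_mpoly_ring [simp]: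
  assumes "p \<in> mpolys V"
  shows "a_inv (mpoly_ring V) p = - p"
proof -
  interpret ring "mpoly_ring V" by (rule ring_mpoly_ring)
  show ?thesis using assms by (intro minus_equality) auto
qed

lemma a_minus_mpoly_ring [simp]:
  "p \<in> mpolys V \<Longrightarrow> q \<in> mpolys V \<Longrightarrow> a_minus (mpoly_ring V) p q = p - q"
  by (simp add: a_minus_def)

lemma mvar_power: "mvar v ^ k = Poly_Mapping.single (Poly_Mapping.single v k) 1"
proof (induction k)
  case (Suc k)
  have "Poly_Mapping.single v 1 + Poly_Mapping.single v k = Poly_Mapping.single v (Suc k)"
    by (simp only: single_add[symmetric]) simp
  then show ?case using Suc by (simp add: mvar_def mult_single)
qed (simp add: mvar_def)

lemma frag_of_eq_prod_mvar_power:
  "frag_of \<mu> = (\<Prod>v\<in>Poly_Mapping.keys \<mu>. mvar v ^ Poly_Mapping.lookup \<mu> v)"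
proof -
  have prod_frag_of: "(\<Prod>v\<in>A. frag_of (f v)) = frag_of (\<Sum>v\<in>A. f v)"
    if "finite A" for A and f :: "'v \<Rightarrow> 'v \<Rightarrow>\<^sub>0 nat"
    using that by (induction A rule: finite_induct) (simp_all add: mult_single)
  have "\<mu> = (\<Sum>v\<in>Poly_Mapping.keys \<mu>. Poly_Mapping.single v (Poly_Mapping.lookup \<mu> v))"
    by (rule poly_mapping_eqI) (auto simp: lookup_sum lookup_single when_def in_keys_iff)
  then show ?thesis
    by (metis (no_types, lifting) finite_keys mvar_power prod.cong prod_frag_of)
qed

lemma mpoly_induct [consumes 1, case_names zero one var diff mult]:
  fixes V :: "'v set"
  assumes p: "p \<in> mpolys V"
    and zero: "P 0" and one: "P 1" and var: "\<And>v. v \<in> V \<Longrightarrow> P (mvar v)"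
    and diff: "\<And>p q. p \<in> mpolys V \<Longrightarrow> q \<in> mpolys V \<Longrightarrow> P p \<Longrightarrow> P q \<Longrightarrow> P (p - q)"
    and mult: "\<And>p q. p \<in> mpolys V \<Longrightarrow> q \<in> mpolys V \<Longrightarrow> P p \<Longrightarrow> P q \<Longrightarrow> P (p * q)"
  shows "P p"
proof -
  have power: "q \<in> mpolys V \<and> P q \<Longrightarrow> q ^ n \<in> mpolys V \<and> P (q ^ n)" for q n
    by (induction n) (auto simp: one mult)
  have prod: "(\<And>x. x \<in> A \<Longrightarrow> f x \<in> mpolys V \<and> P (f x)) \<Longrightarrow> prod f A \<in> mpolys V \<and> P (prod f A)"
    for f and A :: "'x set"
    by (induction A rule: infinite_finite_induct) (auto simp: one mult)
  have "p \<in> mpolys V \<and> P p"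
  proof (rule frag_induction[of p "{\<mu>. Poly_Mapping.keys \<mu> \<subseteq> V}"])
    show "Poly_Mapping.keys p \<subseteq> {\<mu>. Poly_Mapping.keys \<mu> \<subseteq> V}"
      using p by (auto simp: mem_mpolys)
    fix \<mu> :: "'v \<Rightarrow>\<^sub>0 nat" assume "\<mu> \<in> {\<mu>. Poly_Mapping.keys \<mu> \<subseteq> V}"
    then show "frag_of \<mu> \<in> mpolys V \<and> P (frag_of \<mu>)"
      unfolding frag_of_eq_prod_mvar_power by (intro prod power) (auto simp: var)
  qed (use zero diff in auto)
  then show ?thesis by simp
qed

section \<open>Substitution\<close>

definition monomial_eval :: "('v \<Rightarrow> 'w mpoly) \<Rightarrow> ('v \<Rightarrow>\<^sub>0 nat) \<Rightarrow> 'w mpoly" where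
  "monomial_eval \<sigma> \<mu> = (\<Prod>v\<in>Poly_Mapping.keys \<mu>. \<sigma> v ^ Poly_Mapping.lookup \<mu> v)"

definition mpoly_subst :: "('v \<Rightarrow> 'w mpoly) \<Rightarrow> 'v mpoly \<Rightarrow> 'w mpoly" where
  "mpoly_subst \<sigma> p = frag_extend (monomial_eval \<sigma>) p"

lemma monomial_eval_add: "monomial_eval \<sigma> (\<mu> + \<nu>) = monomial_eval \<sigma> \<mu> * monomial_eval \<sigma> \<nu>"
proof -
  let ?K = "Poly_Mapping.keys \<mu> \<union> Poly_Mapping.keys \<nu>"
  have on_K: "monomial_eval \<sigma> \<kappa> = (\<Prod>v\<in>?K. \<sigma> v ^ Poly_Mapping.lookup \<kappa> v)"
    if "Poly_Mapping.keys \<kappa> \<subseteq> ?K" for \<kappa>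
    unfolding monomial_eval_def using that by (intro prod.mono_neutral_left) (auto simp: in_keys_iff)
  show ?thesis
    by (simp add: on_K keys_add_monomial lookup_add power_add prod.distrib)
qed

lemma mpoly_subst_0 [simp]: "mpoly_subst \<sigma> 0 = 0"
  and mpoly_subst_add [simp]: "mpoly_subst \<sigma> (p + q) = mpoly_subst \<sigma> p + mpoly_subst \<sigma> q"
  and mpoly_subst_diff [simp]: "mpoly_subst \<sigma> (p - q) = mpoly_subst \<sigma> p - mpoly_subst \<sigma> q"
  and mpoly_subst_mvar [simp]: "mpoly_subst \<sigma> (mvar v) = \<sigma> v"
  by (simp_all add: mpoly_subst_def frag_extend_add frag_extend_diff
      mvar_def monomial_eval_def)

lemma mpoly_subst_1 [simp]: "mpoly_subst \<sigma> 1 = 1"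
  using frag_extend_of[of "monomial_eval \<sigma>" 0]
  by (simp add: mpoly_subst_def monomial_eval_def)

lemma mpoly_subst_mult [simp]: "mpoly_subst \<sigma> (p * q) = mpoly_subst \<sigma> p * mpoly_subst \<sigma> q"
proof -
  have frag_of_mult: "mpoly_subst \<sigma> (frag_of \<mu> * q) = mpoly_subst \<sigma> (frag_of \<mu>) * mpoly_subst \<sigma> q" for \<mu>
    using subset_UNIV[of "Poly_Mapping.keys q"]
    by (induction q rule: frag_induction)
      (auto simp: mult_single mpoly_subst_def monomial_eval_add right_diff_distrib frag_extend_diff)
  show ?thesis
    using subset_UNIV[of "Poly_Mapping.keys p"]
    by (induction p rule: frag_induction) (auto simp: frag_of_mult left_diff_distrib)
qed

lemma mpoly_subst_sum [simp]: "mpoly_subst \<sigma> (sum f A) = (\<Sum>x\<in>A. mpoly_subst \<sigma> (f x))"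
  by (induction A rule: infinite_finite_induct) auto

lemma mpoly_subst_prod [simp]: "mpoly_subst \<sigma> (prod f A) = (\<Prod>x\<in>A. mpoly_subst \<sigma> (f x))"
  by (induction A rule: infinite_finite_induct) auto

lemma mpoly_subst_power [simp]: "mpoly_subst \<sigma> (p ^ n) = mpoly_subst \<sigma> p ^ n"
  by (induction n) auto

lemma mpoly_subst_mpoly_subst:
  "mpoly_subst \<tau> (mpoly_subst \<sigma> p) = mpoly_subst (\<lambda>v. mpoly_subst \<tau> (\<sigma> v)) p"
proof -
  have "p \<in> mpolys UNIV" by simp
  then show ?thesis by (induction p rule: mpoly_induct) auto
qed

lemma mpoly_subst_mpolys:
  assumes "\<sigma> ` V \<subseteq> mpolys W" and "p \<in> mpolys V"
  shows "mpoly_subst \<sigma> p \<in> mpolys W"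
  using assms(2) by (induction p rule: mpoly_induct) (use assms(1) in auto)

lemma ring_hom_comp_mpoly_subst:
  assumes R: "ring R" and h: "h \<in> ring_hom (mpoly_ring W) R"
    and \<sigma>: "\<sigma> ` V \<subseteq> mpolys W"
  shows "(\<lambda>p. h (mpoly_subst \<sigma> p)) \<in> ring_hom (mpoly_ring V) R"
  using ring_hom_closed[OF h] mpoly_subst_mpolys[OF \<sigma>] by (intro ring_hom_memI)
    (auto simp: ring_hom_add[OF h, simplified] ring_hom_mult[OF h, simplified]
      ring_hom_one[OF h, simplified])

section \<open>Ideals and quotients\<close>

context
  fixes I :: "'v mpoly set" and V :: "'v set"
  assumes I: "ideal I (mpoly_ring V)"
begin

interpretation ideal I "mpoly_ring V" by (rule I)

lemma mpoly_ideal_subset: "I \<subseteq> mpolys V"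
  using a_subset by simp

lemma mpoly_ideal_zero: "0 \<in> I"
  using additive_subgroup.zero_closed[OF is_additive_subgroup] by simp

lemma mpoly_ideal_add: "x \<in> I \<Longrightarrow> y \<in> I \<Longrightarrow> x + y \<in> I"
  using additive_subgroup.a_closed[OF is_additive_subgroup, of x y] by simp

lemma mpoly_ideal_uminus:
  assumes "x \<in> I"
  shows "- x \<in> I"
proof -
  have "a_inv (mpoly_ring V) x \<in> I"
    using additive_subgroup.a_inv_closed[OF is_additive_subgroup assms] .
  moreover have "x \<in> mpolys V" using assms mpoly_ideal_subset by blast
  ultimately show ?thesis by simp
qed

lemma mpoly_ideal_diff: "x \<in> I \<Longrightarrow> y \<in> I \<Longrightarrow> x - y \<in> I"
  using mpoly_ideal_add[OF _ mpoly_ideal_uminus] by (simp only: diff_conv_add_uminus)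

lemma mpoly_ideal_lmult: "x \<in> I \<Longrightarrow> r \<in> mpolys V \<Longrightarrow> r * x \<in> I"
  using I_l_closed by simp

lemma mpoly_ideal_rmult: "x \<in> I \<Longrightarrow> r \<in> mpolys V \<Longrightarrow> x * r \<in> I"
  using I_r_closed by simp

lemma cls_eq_iff:
  assumes p: "p \<in> mpolys V" and q: "q \<in> mpolys V"
  shows "cls (mpoly_ring V) I p = cls (mpoly_ring V) I q \<longleftrightarrow> p - q \<in> I"
proof -
  have "p \<in> I +>\<^bsub>mpoly_ring V\<^esub> q \<longleftrightarrow> p - q \<in> I"
    using a_rcos_module_minus[OF ring_mpoly_ring, of q p] p q by simp
  then show ?thesis
    using a_rcos_self[of p] a_repr_independence'[of p q] p q by (auto simp: cls_def)
qed

lemma cls_eq_ideal_iff: "p \<in> mpolys V \<Longrightarrow> cls (mpoly_ring V) I p = I \<longleftrightarrow> p \<in> I"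
  using cls_eq_iff[of p 0] ring.a_rcos_zero[OF ring_mpoly_ring I mpoly_ideal_zero]
  by (simp add: cls_def)

lemma mpoly_subst_minus_self_in_ideal:
  assumes \<rho>: "\<rho> ` V \<subseteq> mpolys V" and \<rho>I: "\<And>v. v \<in> V \<Longrightarrow> \<rho> v - mvar v \<in> I"
    and p: "p \<in> mpolys V"
  shows "mpoly_subst \<rho> p - p \<in> I"
  using p
proof (induction p rule: mpoly_induct)
  case (diff p q)
  then show ?case
    using mpoly_ideal_diff[OF diff(3,4)] by (simp add: algebra_simps)
next
  case (mult p q)
  have "mpoly_subst \<rho> (p * q) - p * q
      = mpoly_subst \<rho> p * (mpoly_subst \<rho> q - q) + (mpoly_subst \<rho> p - p) * q"
    by (simp add: algebra_simps)
  also have "\<dots> \<in> I"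
    using mult mpoly_subst_mpolys[OF \<rho>]
    by (intro mpoly_ideal_add mpoly_ideal_lmult mpoly_ideal_rmult) auto
  finally show ?case .
qed (simp_all add: mpoly_ideal_zero \<rho>I)

end

lemma a_kernel_cls_mpoly_subst:
  assumes J: "ideal J (mpoly_ring W)" and \<sigma>: "\<sigma> ` V \<subseteq> mpolys W"
  shows "a_kernel (mpoly_ring V) (mpoly_ring W Quot J) (\<lambda>p. cls (mpoly_ring W) J (mpoly_subst \<sigma> p))
       = {p \<in> mpolys V. mpoly_subst \<sigma> p \<in> J}"
  using cls_eq_ideal_iff[OF J mpoly_subst_mpolys[OF \<sigma>]]
  by (auto simp: a_kernel_def' FactRing_def)

lemma ring_hom_ring_cls_mpoly_subst:
  assumes J: "ideal J (mpoly_ring W)" and \<sigma>: "\<sigma> ` V \<subseteq> mpolys W"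
  shows "ring_hom_ring (mpoly_ring V) (mpoly_ring W Quot J) (\<lambda>p. cls (mpoly_ring W) J (mpoly_subst \<sigma> p))"
proof -
  have "ring (mpoly_ring W Quot J)"
    using ideal.quotient_is_cring[OF J cring_mpoly_ring] cring.axioms(1) by blast
  moreover have "cls (mpoly_ring W) J \<in> ring_hom (mpoly_ring W) (mpoly_ring W Quot J)"
    unfolding cls_def by (rule ideal.rcos_ring_hom[OF J])
  ultimately show ?thesis
    using \<sigma> by (intro ring_hom_ringI2 ring_mpoly_ring ring_hom_comp_mpoly_subst)
qed

lemma mpoly_subst_genideal_subset:
  assumes G: "G \<subseteq> mpolys V" and J: "ideal J (mpoly_ring W)"
    and \<sigma>: "\<sigma> ` V \<subseteq> mpolys W" and \<sigma>G: "mpoly_subst \<sigma> ` G \<subseteq> J"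
  shows "mpoly_subst \<sigma> ` genideal (mpoly_ring V) G \<subseteq> J"
proof -
  interpret h: ring_hom_ring "mpoly_ring V" "mpoly_ring W Quot J"
      "\<lambda>p. cls (mpoly_ring W) J (mpoly_subst \<sigma> p)"
    by (rule ring_hom_ring_cls_mpoly_subst[OF J \<sigma>])
  have "genideal (mpoly_ring V) G \<subseteq> a_kernel (mpoly_ring V) (mpoly_ring W Quot J)
      (\<lambda>p. cls (mpoly_ring W) J (mpoly_subst \<sigma> p))"
    by (rule h.R.genideal_minimal[OF h.kernel_is_ideal])
      (use G \<sigma>G in \<open>auto simp: a_kernel_cls_mpoly_subst[OF J \<sigma>]\<close>)
  then show ?thesis by (auto simp: a_kernel_cls_mpoly_subst[OF J \<sigma>])
qed

lemma mpoly_Quot_iso_of_inverse_substs: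
  assumes I: "ideal I (mpoly_ring V)" and J: "ideal J (mpoly_ring W)"
    and \<sigma>: "\<sigma> ` V \<subseteq> mpolys W" and \<tau>: "\<tau> ` W \<subseteq> mpolys V"
    and \<sigma>I: "mpoly_subst \<sigma> ` I \<subseteq> J" and \<tau>J: "mpoly_subst \<tau> ` J \<subseteq> I"
    and \<tau>\<sigma>: "\<And>v. v \<in> V \<Longrightarrow> mpoly_subst \<tau> (\<sigma> v) - mvar v \<in> I"
    and \<sigma>\<tau>: "\<And>w. w \<in> W \<Longrightarrow> mpoly_subst \<sigma> (\<tau> w) - mvar w \<in> J"
  shows "\<exists>\<phi>. \<phi> \<in> ring_iso (mpoly_ring V Quot I) (mpoly_ring W Quot J) \<and>
           (\<forall>p\<in>mpolys V. \<phi> (cls (mpoly_ring V) I p) = cls (mpoly_ring W) J (mpoly_subst \<sigma> p))"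
proof -
  let ?h = "\<lambda>p. cls (mpoly_ring W) J (mpoly_subst \<sigma> p)"
  interpret h: ring_hom_ring "mpoly_ring V" "mpoly_ring W Quot J" ?h
    by (rule ring_hom_ring_cls_mpoly_subst[OF J \<sigma>])
  have \<tau>\<sigma>_mpolys: "(\<lambda>v. mpoly_subst \<tau> (\<sigma> v)) ` V \<subseteq> mpolys V"
    using \<sigma> mpoly_subst_mpolys[OF \<tau>] by auto
  have \<sigma>\<tau>_mpolys: "(\<lambda>w. mpoly_subst \<sigma> (\<tau> w)) ` W \<subseteq> mpolys W"
    using \<tau> mpoly_subst_mpolys[OF \<sigma>] by auto
  have kernel: "a_kernel (mpoly_ring V) (mpoly_ring W Quot J) ?h = I"
  proof -
    have "p \<in> I" if p: "p \<in> mpolys V" and \<sigma>p: "mpoly_subst \<sigma> p \<in> J" for p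
    proof -
      have "mpoly_subst \<tau> (mpoly_subst \<sigma> p) \<in> I"
        using \<tau>J \<sigma>p by blast
      moreover have "mpoly_subst \<tau> (mpoly_subst \<sigma> p) - p \<in> I"
        unfolding mpoly_subst_mpoly_subst
        by (rule mpoly_subst_minus_self_in_ideal[OF I \<tau>\<sigma>_mpolys \<tau>\<sigma> p])
      ultimately show ?thesis
        using mpoly_ideal_diff[OF I] by fastforce
    qed
    then show ?thesis
      using \<sigma>I mpoly_ideal_subset[OF I] by (auto simp: a_kernel_cls_mpoly_subst[OF J \<sigma>])
  qed
  have "?h ` carrier (mpoly_ring V) = carrier (mpoly_ring W Quot J)"
  proof
    show "?h ` carrier (mpoly_ring V) \<subseteq> carrier (mpoly_ring W Quot J)"
      using h.hom_closed by blast
    show "carrier (mpoly_ring W Quot J) \<subseteq> ?h ` carrier (mpoly_ring V)"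
    proof
      fix X assume "X \<in> carrier (mpoly_ring W Quot J)"
      then obtain q where q: "q \<in> mpolys W" and X: "X = cls (mpoly_ring W) J q"
        by (auto simp: FactRing_def A_RCOSETS_def' cls_def)
      have "mpoly_subst \<sigma> (mpoly_subst \<tau> q) - q \<in> J"
        unfolding mpoly_subst_mpoly_subst
        by (rule mpoly_subst_minus_self_in_ideal[OF J \<sigma>\<tau>_mpolys \<sigma>\<tau> q])
      then have "?h (mpoly_subst \<tau> q) = X"
        using cls_eq_iff[OF J] mpoly_subst_mpolys[OF \<sigma>] mpoly_subst_mpolys[OF \<tau>] q X by auto
      moreover have "mpoly_subst \<tau> q \<in> carrier (mpoly_ring V)"
        using mpoly_subst_mpolys[OF \<tau> q] by simp
      ultimately show "X \<in> ?h ` carrier (mpoly_ring V)" by blast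
    qed
  qed
  then have "(\<lambda>X. the_elem (?h ` X)) \<in> ring_iso (mpoly_ring V Quot I) (mpoly_ring W Quot J)"
    using h.FactRing_iso_set unfolding kernel by blast
  moreover have "the_elem (?h ` cls (mpoly_ring V) I p) = ?h p" if "p \<in> mpolys V" for p
    using h.the_elem_simp[of p] that unfolding kernel by (simp add: cls_def)
  ultimately show ?thesis by blast
qed

section \<open>The Chow ring of the polystellahedral fan\<close>

text \<open>The class \<open>y\<^sub>i\<close>: the linear relation for \<open>e\<^sub>j\<^sup>*\<close> identifies \<open>\<tilde>y\<^sub>j\<close> with this sum
  whenever \<open>\<pi> j = i\<close>.\<close>
definition chow_y :: "nat \<Rightarrow> nat \<Rightarrow> 'e ray mpoly" where
  "chow_y m i = (\<Sum>S | S \<subset> groundE m \<and> i \<notin> S. mvar (RS S))"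

definition pres_to_chow :: "nat \<Rightarrow> gen \<Rightarrow> 'e ray mpoly" where
  "pres_to_chow m g = (case g of GX S \<Rightarrow> mvar (RS S) | GY i \<Rightarrow> chow_y m i)"

definition chow_to_pres :: "('e \<Rightarrow> nat) \<Rightarrow> 'e ray \<Rightarrow> gen mpoly" where
  "chow_to_pres \<pi> r = (case r of RS S \<Rightarrow> mvar (GX S) | RE j \<Rightarrow> mvar (GY (\<pi> j)))"

lemma pres_to_chow_simps [simp]:
  "pres_to_chow m (GX S) = mvar (RS S)" "pres_to_chow m (GY i) = chow_y m i"
  by (simp_all add: pres_to_chow_def)

lemma chow_to_pres_simps [simp]:
  "chow_to_pres \<pi> (RS S) = mvar (GX S)" "chow_to_pres \<pi> (RE j) = mvar (GY (\<pi> j))"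
  by (simp_all add: chow_to_pres_def)

lemma finite_psubsets_groundE [simp]: "finite {S. S \<subset> groundE m}"
  and finite_psubsets_groundE_with [simp]: "finite {S. S \<subset> groundE m \<and> P S}"
  by (rule finite_subset[of _ "Pow (groundE m)"], auto simp: groundE_def)+

lemma RS_in_rays [simp]: "RS S \<in> rays m Et \<longleftrightarrow> S \<subset> groundE m"
  and RE_in_rays [simp]: "RE j \<in> rays m Et \<longleftrightarrow> j \<in> Et"
  and GX_in_pres_vars [simp]: "GX S \<in> pres_vars m \<longleftrightarrow> S \<subset> groundE m"
  and GY_in_pres_vars [simp]: "GY i \<in> pres_vars m \<longleftrightarrow> i \<in> groundE m"
  by (auto simp: rays_def pres_vars_def)

lemma chow_y_mpolys [simp]: "chow_y m i \<in> mpolys (rays m Et)"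
  unfolding chow_y_def by (intro mpolys_sum mpolys_mvar) simp

lemma mpoly_subst_chow_to_pres_chow_y:
  "mpoly_subst (chow_to_pres \<pi>) (chow_y m i) = (\<Sum>S | S \<subset> groundE m \<and> i \<notin> S. mvar (GX S))"
  by (simp add: chow_y_def)

lemma pres_to_chow_mpolys: "pres_to_chow m ` pres_vars m \<subseteq> mpolys (rays m Et)"
proof (rule image_subsetI)
  fix g assume "g \<in> pres_vars m"
  then show "pres_to_chow m g \<in> mpolys (rays m Et)" by (cases g) simp_all
qed

lemma ideal_mpoly_ring_genideal:
  assumes "G \<subseteq> mpolys V"
  shows "ideal (genideal (mpoly_ring V) G) (mpoly_ring V)" and "G \<subseteq> genideal (mpoly_ring V) G"
  using ring.genideal_ideal[OF ring_mpoly_ring] ring.genideal_self[OF ring_mpoly_ring] assms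
  by simp_all

lemma pres_gens_mpolys: "pres_gens m a \<subseteq> mpolys (pres_vars m)"
  by (auto simp: pres_gens_def intro!: mpolys_mult mpolys_mvar mpolys_power mpolys_diff mpolys_sum)

lemma ideal_pres_ideal: "ideal (pres_ideal m a) (mpoly_ring (pres_vars m))"
  and pres_gens_subset_pres_ideal: "pres_gens m a \<subseteq> pres_ideal m a"
  unfolding pres_ideal_def pres_poly_def
  by (fact ideal_mpoly_ring_genideal[OF pres_gens_mpolys[of m a]])+

lemma chow_gens_mpolys: "SR_gens m Et \<pi> \<union> lin_gens m Et \<pi> \<subseteq> mpolys (rays m Et)"
  by (auto simp: SR_gens_def lin_gens_def intro!: mpolys_prod mpolys_mvar mpolys_diff mpolys_sum)

lemma ideal_chow_ideal: "ideal (chow_ideal m Et \<pi>) (mpoly_ring (rays m Et))"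
  and chow_gens_subset_chow_ideal: "SR_gens m Et \<pi> \<union> lin_gens m Et \<pi> \<subseteq> chow_ideal m Et \<pi>"
  unfolding chow_ideal_def chow_poly_def
  by (fact ideal_mpoly_ring_genideal[OF chow_gens_mpolys[of m Et \<pi>]])+

lemma incomparable_in_pres_ideal:
  assumes "S1 \<subset> groundE m" "S2 \<subset> groundE m" "\<not> S1 \<subseteq> S2" "\<not> S2 \<subseteq> S1"
  shows "mvar (GX S1) * mvar (GX S2) \<in> pres_ideal m a"
proof -
  have "mvar (GX S1) * mvar (GX S2) \<in> pres_gens m a"
    unfolding pres_gens_def using assms by (intro UnI1 CollectI exI[of _ S1] exI[of _ S2]) simp
  then show ?thesis using pres_gens_subset_pres_ideal by blast
qed

lemma GX_times_GY_power_in_pres_ideal: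
  assumes "S \<subset> groundE m" "i \<in> groundE m" "i \<notin> S"
  shows "mvar (GX S) * mvar (GY i) ^ a i \<in> pres_ideal m a"
proof -
  have "mvar (GX S) * mvar (GY i) ^ a i \<in> pres_gens m a"
    unfolding pres_gens_def using assms by (intro UnI1 UnI2 CollectI exI[of _ S] exI[of _ i]) simp
  then show ?thesis using pres_gens_subset_pres_ideal by blast
qed

lemma GY_minus_sum_GX_in_pres_ideal:
  assumes "i \<in> groundE m"
  shows "mvar (GY i) - (\<Sum>S | S \<subset> groundE m \<and> i \<notin> S. mvar (GX S)) \<in> pres_ideal m a"
proof -
  have "mvar (GY i) - (\<Sum>S | S \<subset> groundE m \<and> i \<notin> S. mvar (GX S)) \<in> pres_gens m a"
    unfolding pres_gens_def using assms by (intro UnI2 CollectI exI[of _ i]) simp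
  then show ?thesis using pres_gens_subset_pres_ideal by blast
qed

lemma is_coneI:
  assumes "I \<subseteq> Et" "\<forall>F\<in>\<F>. F \<subset> groundE m" "\<forall>F\<in>\<F>. \<forall>G\<in>\<F>. F \<subseteq> G \<or> G \<subseteq> F"
    "\<sigma> = RS ` \<F> \<union> RE ` I"
    "\<forall>A. A \<subseteq> groundE m \<longrightarrow> {j\<in>Et. \<pi> j \<in> A} \<subseteq> I \<longrightarrow>
       A \<subseteq> (if \<F> = {} then groundE m else \<Inter>\<F>)"
  shows "is_cone m Et \<pi> \<sigma>"
  unfolding is_cone_def by (intro exI[of _ I] exI[of _ \<F>] conjI assms)

lemma is_coneE:
  assumes "is_cone m Et \<pi> \<sigma>"
  obtains I \<F> where "I \<subseteq> Et" "\<forall>F\<in>\<F>. F \<subset> groundE m" "\<forall>F\<in>\<F>. \<forall>G\<in>\<F>. F \<subseteq> G \<or> G \<subseteq> F"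
    "\<sigma> = RS ` \<F> \<union> RE ` I"
    "\<forall>A. A \<subseteq> groundE m \<longrightarrow> {j\<in>Et. \<pi> j \<in> A} \<subseteq> I \<longrightarrow>
       A \<subseteq> (if \<F> = {} then groundE m else \<Inter>\<F>)"
  using assms unfolding is_cone_def by (elim exE conjE) (rule that)

lemma ray_set_eq_RS_Un_RE: "\<sigma> = RS ` {S. RS S \<in> \<sigma>} \<union> RE ` {j. RE j \<in> \<sigma>}"
proof -
  have "r \<in> RS ` {S. RS S \<in> \<sigma>} \<union> RE ` {j. RE j \<in> \<sigma>}" if "r \<in> \<sigma>" for r
    using that by (cases r) simp_all
  then show ?thesis by auto
qed

locale polystellahedral =
  fixes m :: nat and a :: "nat \<Rightarrow> nat" and Et :: "'e set" and \<pi> :: "'e \<Rightarrow> nat"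
  assumes finite_Et: "finite Et"
    and \<pi>_into_groundE: "\<pi> ` Et \<subseteq> groundE m"
    and card_fibre: "\<forall>i\<in>groundE m. card {j\<in>Et. \<pi> j = i} = a i"
begin

abbreviation fibre :: "nat \<Rightarrow> 'e set" where
  "fibre i \<equiv> {j\<in>Et. \<pi> j = i}"

lemma finite_rays: "finite (rays m Et)"
  using finite_Et by (simp add: rays_def)

lemma chow_to_pres_mpolys: "chow_to_pres \<pi> ` rays m Et \<subseteq> mpolys (pres_vars m)"
proof (rule image_subsetI)
  fix r assume "r \<in> rays m Et"
  then show "chow_to_pres \<pi> r \<in> mpolys (pres_vars m)"
    using \<pi>_into_groundE by (cases r) auto
qed

lemma not_is_cone_incomparable:
  assumes "\<not> S1 \<subseteq> S2" "\<not> S2 \<subseteq> S1"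
  shows "\<not> is_cone m Et \<pi> {RS S1, RS S2}"
proof
  assume "is_cone m Et \<pi> {RS S1, RS S2}"
  then obtain I \<F> where "I \<subseteq> Et" "\<forall>F\<in>\<F>. F \<subset> groundE m"
    and chain: "\<forall>F\<in>\<F>. \<forall>G\<in>\<F>. F \<subseteq> G \<or> G \<subseteq> F"
    and eq: "{RS S1, RS S2} = RS ` \<F> \<union> RE ` I"
    and "\<forall>A. A \<subseteq> groundE m \<longrightarrow> {j\<in>Et. \<pi> j \<in> A} \<subseteq> I \<longrightarrow>
              A \<subseteq> (if \<F> = {} then groundE m else \<Inter>\<F>)"
    by (rule is_coneE)
  have "RS S1 \<in> RS ` \<F> \<union> RE ` I" "RS S2 \<in> RS ` \<F> \<union> RE ` I"
    unfolding eq[symmetric] by simp_all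
  then have "S1 \<in> \<F>" "S2 \<in> \<F>" by auto
  then show False using chain assms by blast
qed

lemma not_is_cone_fibre:
  assumes "i \<in> groundE m" "i \<notin> S"
  shows "\<not> is_cone m Et \<pi> (insert (RS S) (RE ` fibre i))"
proof
  assume "is_cone m Et \<pi> (insert (RS S) (RE ` fibre i))"
  then obtain I \<F> where "I \<subseteq> Et" "\<forall>F\<in>\<F>. F \<subset> groundE m"
    "\<forall>F\<in>\<F>. \<forall>G\<in>\<F>. F \<subseteq> G \<or> G \<subseteq> F"
    and eq: "insert (RS S) (RE ` fibre i) = RS ` \<F> \<union> RE ` I"
    and A: "\<forall>A. A \<subseteq> groundE m \<longrightarrow> {j\<in>Et. \<pi> j \<in> A} \<subseteq> I \<longrightarrow>
              A \<subseteq> (if \<F> = {} then groundE m else \<Inter>\<F>)"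
    by (rule is_coneE)
  have "RS S \<in> RS ` \<F> \<union> RE ` I" unfolding eq[symmetric] by simp
  then have "S \<in> \<F>" by auto
  have "RE j \<in> RS ` \<F> \<union> RE ` I" if "j \<in> fibre i" for j
    unfolding eq[symmetric] using that by simp
  then have "{j\<in>Et. \<pi> j \<in> {i}} \<subseteq> I" by auto
  then have "{i} \<subseteq> (if \<F> = {} then groundE m else \<Inter>\<F>)"
    using A[rule_format, of "{i}"] assms(1) by simp
  then show False using \<open>S \<in> \<F>\<close> assms(2) by (auto split: if_split_asm)
qed

lemma not_is_cone_contains_minimal_nonface:
  assumes "\<sigma> \<subseteq> rays m Et" and "\<not> is_cone m Et \<pi> \<sigma>"
  obtains S1 S2 where "RS S1 \<in> \<sigma>" "RS S2 \<in> \<sigma>" "\<not> S1 \<subseteq> S2" "\<not> S2 \<subseteq> S1"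
  | S i where "RS S \<in> \<sigma>" "i \<in> groundE m" "i \<notin> S" "RE ` fibre i \<subseteq> \<sigma>"
proof -
  define \<F> where "\<F> = {S. RS S \<in> \<sigma>}"
  define I where "I = {j. RE j \<in> \<sigma>}"
  have I_Et: "I \<subseteq> Et"
    using assms(1) by (auto simp: I_def)
  have \<F>_psub: "\<forall>F\<in>\<F>. F \<subset> groundE m"
    using assms(1) unfolding \<F>_def by (metis RS_in_rays mem_Collect_eq subsetD)
  have "\<not> ((\<forall>F\<in>\<F>. \<forall>G\<in>\<F>. F \<subseteq> G \<or> G \<subseteq> F) \<and>
      (\<forall>A. A \<subseteq> groundE m \<longrightarrow> {j\<in>Et. \<pi> j \<in> A} \<subseteq> I \<longrightarrow>
              A \<subseteq> (if \<F> = {} then groundE m else \<Inter>\<F>)))"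
    using is_coneI[OF I_Et \<F>_psub _ ray_set_eq_RS_Un_RE[of \<sigma>, folded \<F>_def I_def]] assms(2)
    by blast
  then consider (incomparable) F G where "F \<in> \<F>" "G \<in> \<F>" "\<not> F \<subseteq> G" "\<not> G \<subseteq> F"
    | (uncovered) A where "A \<subseteq> groundE m" "{j\<in>Et. \<pi> j \<in> A} \<subseteq> I"
        "\<not> A \<subseteq> (if \<F> = {} then groundE m else \<Inter>\<F>)"
    by blast
  then show thesis
  proof cases
    case incomparable
    then show thesis using that(1) by (simp add: \<F>_def)
  next
    case uncovered
    then have "\<F> \<noteq> {}" by auto
    then obtain i S where "i \<in> A" "S \<in> \<F>" "i \<notin> S"
      using uncovered(3) by auto
    moreover have "RE ` fibre i \<subseteq> \<sigma>"
      using uncovered(2) \<open>i \<in> A\<close> by (auto simp: I_def)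
    ultimately show thesis
      using that(2)[of S i] uncovered(1) by (auto simp: \<F>_def)
  qed
qed

lemma prod_mvar_nonface_in_chow_ideal:
  assumes "\<sigma> \<subseteq> rays m Et" "\<not> is_cone m Et \<pi> \<sigma>"
  shows "prod mvar \<sigma> \<in> chow_ideal m Et \<pi>"
  using assms chow_gens_subset_chow_ideal unfolding SR_gens_def by blast

lemma RE_minus_chow_y_in_chow_ideal:
  assumes "j \<in> Et"
  shows "mvar (RE j) - chow_y m (\<pi> j) \<in> chow_ideal m Et \<pi>"
proof -
  have "mvar (RE j) - chow_y m (\<pi> j) \<in> lin_gens m Et \<pi>"
    unfolding lin_gens_def chow_y_def using assms by (intro CollectI exI[of _ j]) simp
  then show ?thesis using chow_gens_subset_chow_ideal by blast
qed

lemma prod_fibre_minus_chow_y_power_in_chow_ideal: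
  assumes "finite J" "J \<subseteq> fibre i"
  shows "(\<Prod>j\<in>J. mvar (RE j)) - chow_y m i ^ card J \<in> chow_ideal m Et \<pi>"
  using assms
proof (induction J rule: finite_induct)
  case empty
  then show ?case using mpoly_ideal_zero[OF ideal_chow_ideal] by simp
next
  case (insert j J)
  then have j: "j \<in> Et" "\<pi> j = i" and J: "J \<subseteq> Et" by auto
  have "(\<Prod>j\<in>insert j J. mvar (RE j)) - chow_y m i ^ card (insert j J)
      = mvar (RE j) * ((\<Prod>j\<in>J. mvar (RE j)) - chow_y m i ^ card J)
        + (mvar (RE j) - chow_y m (\<pi> j)) * chow_y m i ^ card J"
    using insert j by (simp add: algebra_simps)
  also have "\<dots> \<in> chow_ideal m Et \<pi>"
    using insert j J RE_minus_chow_y_in_chow_ideal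
    by (intro mpoly_ideal_add[OF ideal_chow_ideal] mpoly_ideal_lmult[OF ideal_chow_ideal]
        mpoly_ideal_rmult[OF ideal_chow_ideal]) auto
  finally show ?case .
qed

lemma RS_times_chow_y_power_in_chow_ideal:
  assumes S: "S \<subset> groundE m" and i: "i \<in> groundE m" "i \<notin> S"
  shows "mvar (RS S) * chow_y m i ^ a i \<in> chow_ideal m Et \<pi>"
proof -
  let ?e = "\<Prod>j\<in>fibre i. mvar (RE j)"
  have "prod mvar (insert (RS S) (RE ` fibre i)) = mvar (RS S) * prod mvar (RE ` fibre i)"
    using finite_Et by (simp add: image_iff)
  also have "prod mvar (RE ` fibre i) = ?e"
    by (simp add: prod.reindex inj_on_def)
  finally have "prod mvar (insert (RS S) (RE ` fibre i)) = mvar (RS S) * ?e" .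
  moreover have "insert (RS S) (RE ` fibre i) \<subseteq> rays m Et"
    using S by (simp add: image_subset_iff)
  ultimately have nonface: "mvar (RS S) * ?e \<in> chow_ideal m Et \<pi>"
    using prod_mvar_nonface_in_chow_ideal[OF _ not_is_cone_fibre[OF i]] by simp
  have "?e - chow_y m i ^ a i \<in> chow_ideal m Et \<pi>"
    using prod_fibre_minus_chow_y_power_in_chow_ideal[of "fibre i" i] finite_Et card_fibre i(1)
    by simp
  then have "mvar (RS S) * (?e - chow_y m i ^ a i) \<in> chow_ideal m Et \<pi>"
    using S by (intro mpoly_ideal_lmult[OF ideal_chow_ideal]) simp_all
  with nonface have "mvar (RS S) * ?e - mvar (RS S) * (?e - chow_y m i ^ a i) \<in> chow_ideal m Et \<pi>"
    by (rule mpoly_ideal_diff[OF ideal_chow_ideal])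
  then show ?thesis by (simp add: algebra_simps)
qed

lemma mpoly_subst_pres_to_chow_pres_gens:
  "mpoly_subst (pres_to_chow m) ` pres_gens m a \<subseteq> chow_ideal m Et \<pi>"
proof (rule image_subsetI)
  fix g assume "g \<in> pres_gens m a"
  consider (incomparable) S1 S2 where "g = mvar (GX S1) * mvar (GX S2)"
      "S1 \<subset> groundE m" "S2 \<subset> groundE m" "\<not> S1 \<subseteq> S2" "\<not> S2 \<subseteq> S1"
    | (fibre) S i where "g = mvar (GX S) * mvar (GY i) ^ a i" "S \<subset> groundE m" "i \<in> groundE m" "i \<notin> S"
    | (linear) i where "g = mvar (GY i) - (\<Sum>S | S \<subset> groundE m \<and> i \<notin> S. mvar (GX S))"
      "i \<in> groundE m"
    using \<open>g \<in> pres_gens m a\<close> unfolding pres_gens_def by blast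
  then show "mpoly_subst (pres_to_chow m) g \<in> chow_ideal m Et \<pi>"
  proof cases
    case incomparable
    moreover have "prod mvar {RS S1, RS S2} = mvar (RS S1) * mvar (RS S2)"
      using incomparable(4) by auto
    ultimately show ?thesis
      using prod_mvar_nonface_in_chow_ideal[OF _ not_is_cone_incomparable] by simp
  next
    case fibre
    then show ?thesis using RS_times_chow_y_power_in_chow_ideal by simp
  next
    case linear
    then show ?thesis using mpoly_ideal_zero[OF ideal_chow_ideal] by (simp add: chow_y_def)
  qed
qed

lemma mpoly_subst_chow_to_pres_nonface:
  assumes \<sigma>: "\<sigma> \<subseteq> rays m Et" and nonface: "\<not> is_cone m Et \<pi> \<sigma>"
  shows "mpoly_subst (chow_to_pres \<pi>) (prod mvar \<sigma>) \<in> pres_ideal m a"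
proof -
  have superset_in_ideal: "mpoly_subst (chow_to_pres \<pi>) (prod mvar \<sigma>) \<in> pres_ideal m a"
    if \<tau>: "\<tau> \<subseteq> \<sigma>" and \<tau>_ideal: "mpoly_subst (chow_to_pres \<pi>) (prod mvar \<tau>) \<in> pres_ideal m a" for \<tau>
  proof -
    have "finite \<sigma>" using finite_subset[OF \<sigma> finite_rays] .
    then have "prod mvar \<sigma> = prod mvar \<tau> * prod mvar (\<sigma> - \<tau>)"
      using prod.subset_diff[OF \<tau>, of mvar] by (simp add: mult.commute)
    moreover have "mpoly_subst (chow_to_pres \<pi>) (prod mvar (\<sigma> - \<tau>)) \<in> mpolys (pres_vars m)"
      using \<sigma> by (intro mpoly_subst_mpolys[OF chow_to_pres_mpolys] mpolys_prod mpolys_mvar) auto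
    ultimately show ?thesis
      using mpoly_ideal_rmult[OF ideal_pres_ideal \<tau>_ideal] by simp
  qed
  from assms show ?thesis
  proof (rule not_is_cone_contains_minimal_nonface)
    fix S1 S2 assume S12: "RS S1 \<in> \<sigma>" "RS S2 \<in> \<sigma>" "\<not> S1 \<subseteq> S2" "\<not> S2 \<subseteq> S1"
    then have "S1 \<subset> groundE m" "S2 \<subset> groundE m"
      using \<sigma> by (metis RS_in_rays subsetD)+
    then have "mvar (GX S1) * mvar (GX S2) \<in> pres_ideal m a"
      using S12(3,4) by (rule incomparable_in_pres_ideal)
    then show ?thesis
      using superset_in_ideal[of "{RS S1, RS S2}"] S12 by auto
  next
    fix S i assume S: "RS S \<in> \<sigma>" and i: "i \<in> groundE m" "i \<notin> S" and fibre: "RE ` fibre i \<subseteq> \<sigma>"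
    have "S \<subset> groundE m"
      using \<sigma> S by (metis RS_in_rays subsetD)
    have "mpoly_subst (chow_to_pres \<pi>) (prod mvar (insert (RS S) (RE ` fibre i)))
        = mvar (GX S) * (\<Prod>j\<in>fibre i. mvar (GY (\<pi> j)))"
      using finite_Et by (simp add: image_iff prod.reindex inj_on_def)
    also have "(\<Prod>j\<in>fibre i. mvar (GY (\<pi> j))) = mvar (GY i) ^ a i"
      using card_fibre i(1) by simp
    also have "mvar (GX S) * mvar (GY i) ^ a i \<in> pres_ideal m a"
      using \<open>S \<subset> groundE m\<close> i by (rule GX_times_GY_power_in_pres_ideal)
    finally show ?thesis
      by (rule superset_in_ideal[rotated]) (use S fibre in blast)
  qed
qed

lemma mpoly_subst_chow_to_pres_chow_gens:
  "mpoly_subst (chow_to_pres \<pi>) ` (SR_gens m Et \<pi> \<union> lin_gens m Et \<pi>) \<subseteq> pres_ideal m a"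
proof (rule image_subsetI, elim UnE)
  fix g assume "g \<in> SR_gens m Et \<pi>"
  then obtain \<sigma> where "g = prod mvar \<sigma>" "\<sigma> \<subseteq> rays m Et" "\<not> is_cone m Et \<pi> \<sigma>"
    unfolding SR_gens_def by blast
  then show "mpoly_subst (chow_to_pres \<pi>) g \<in> pres_ideal m a"
    using mpoly_subst_chow_to_pres_nonface by simp
next
  fix g assume "g \<in> lin_gens m Et \<pi>"
  then obtain k where "k \<in> Et" "g = mvar (RE k) - chow_y m (\<pi> k)"
    unfolding lin_gens_def chow_y_def by blast
  then show "mpoly_subst (chow_to_pres \<pi>) g \<in> pres_ideal m a"
    using GY_minus_sum_GX_in_pres_ideal \<pi>_into_groundE
    by (auto simp: mpoly_subst_chow_to_pres_chow_y)
qed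

lemma cls_RE_eq_cls_chow_y:
  assumes "j \<in> Et"
  shows "cls (chow_poly m Et) (chow_ideal m Et \<pi>) (mvar (RE j))
       = cls (chow_poly m Et) (chow_ideal m Et \<pi>) (chow_y m (\<pi> j))"
  unfolding chow_poly_def
  by (subst cls_eq_iff[OF ideal_chow_ideal]) (simp_all add: RE_minus_chow_y_in_chow_ideal assms)

theorem pres_ring_iso_chow_ring:
  "\<exists>\<phi>. \<phi> \<in> ring_iso (pres_ring m a) (chow_ring m Et \<pi>) \<and>
     (\<forall>p\<in>mpolys (pres_vars m). \<phi> (cls (pres_poly m) (pres_ideal m a) p)
        = cls (chow_poly m Et) (chow_ideal m Et \<pi>) (mpoly_subst (pres_to_chow m) p))"
  unfolding pres_ring_def chow_ring_def pres_poly_def chow_poly_def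
proof (rule mpoly_Quot_iso_of_inverse_substs
    [OF ideal_pres_ideal ideal_chow_ideal pres_to_chow_mpolys chow_to_pres_mpolys])
  show "mpoly_subst (pres_to_chow m) ` pres_ideal m a \<subseteq> chow_ideal m Et \<pi>"
    unfolding pres_ideal_def pres_poly_def
    by (rule mpoly_subst_genideal_subset[OF pres_gens_mpolys ideal_chow_ideal pres_to_chow_mpolys
          mpoly_subst_pres_to_chow_pres_gens])
  show "mpoly_subst (chow_to_pres \<pi>) ` chow_ideal m Et \<pi> \<subseteq> pres_ideal m a"
    unfolding chow_ideal_def chow_poly_def
    by (rule mpoly_subst_genideal_subset[OF chow_gens_mpolys ideal_pres_ideal chow_to_pres_mpolys
          mpoly_subst_chow_to_pres_chow_gens])
  show "mpoly_subst (chow_to_pres \<pi>) (pres_to_chow m v) - mvar v \<in> pres_ideal m a"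
    if "v \<in> pres_vars m" for v
  proof (cases v)
    case (GY i)
    then show ?thesis
      using that mpoly_ideal_uminus[OF ideal_pres_ideal GY_minus_sum_GX_in_pres_ideal]
      by (simp add: mpoly_subst_chow_to_pres_chow_y)
  qed (simp add: mpoly_ideal_zero[OF ideal_pres_ideal])
  show "mpoly_subst (pres_to_chow m) (chow_to_pres \<pi> r) - mvar r \<in> chow_ideal m Et \<pi>"
    if "r \<in> rays m Et" for r
  proof (cases r)
    case (RE j)
    then show ?thesis
      using that mpoly_ideal_uminus[OF ideal_chow_ideal RE_minus_chow_y_in_chow_ideal] by simp
  qed (simp add: mpoly_ideal_zero[OF ideal_chow_ideal])
qed

end

theorem corollary2p5:
  fixes m :: nat and a :: "nat \<Rightarrow> nat" and Et :: "'e set" and \<pi> :: "'e \<Rightarrow> nat"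
  assumes "finite Et"
    and "\<pi> ` Et \<subseteq> groundE m"
    and "\<forall>i\<in>groundE m. card {j\<in>Et. \<pi> j = i} = a i"
  shows "(\<forall>i\<in>groundE m. \<forall>j\<in>Et. \<forall>j'\<in>Et. \<pi> j = i \<longrightarrow> \<pi> j' = i \<longrightarrow>
            cls (chow_poly m Et) (chow_ideal m Et \<pi>) (mvar (RE j))
          = cls (chow_poly m Et) (chow_ideal m Et \<pi>) (mvar (RE j')))
       \<and> (\<exists>\<phi>. \<phi> \<in> ring_iso (pres_ring m a) (chow_ring m Et \<pi>)
            \<and> (\<forall>S. S \<subset> groundE m \<longrightarrow>
                  \<phi> (cls (pres_poly m) (pres_ideal m a) (mvar (GX S)))
                = cls (chow_poly m Et) (chow_ideal m Et \<pi>) (mvar (RS S)))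
            \<and> (\<forall>i\<in>groundE m. \<forall>j\<in>Et. \<pi> j = i \<longrightarrow>
                  \<phi> (cls (pres_poly m) (pres_ideal m a) (mvar (GY i)))
                = cls (chow_poly m Et) (chow_ideal m Et \<pi>) (mvar (RE j))))"
proof -
  interpret polystellahedral m a Et \<pi> using assms by unfold_locales
  obtain \<phi> where iso: "\<phi> \<in> ring_iso (pres_ring m a) (chow_ring m Et \<pi>)"
    and \<phi>_cls: "\<forall>p\<in>mpolys (pres_vars m). \<phi> (cls (pres_poly m) (pres_ideal m a) p)
        = cls (chow_poly m Et) (chow_ideal m Et \<pi>) (mpoly_subst (pres_to_chow m) p)"
    using pres_ring_iso_chow_ring by blast
  have GX: "\<phi> (cls (pres_poly m) (pres_ideal m a) (mvar (GX S)))
      = cls (chow_poly m Et) (chow_ideal m Et \<pi>) (mvar (RS S))" if "S \<subset> groundE m" for S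
    using \<phi>_cls that by simp
  have GY: "\<phi> (cls (pres_poly m) (pres_ideal m a) (mvar (GY (\<pi> j))))
      = cls (chow_poly m Et) (chow_ideal m Et \<pi>) (mvar (RE j))" if "j \<in> Et" for j
    using \<phi>_cls that \<pi>_into_groundE cls_RE_eq_cls_chow_y by auto
  show ?thesis
    using iso GX GY cls_RE_eq_cls_chow_y by metis
qed

end
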